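(* Let $\gamma>0$, $\tau>1$, $\alpha\in D_{\gamma,\tau}$, and let $p_n/q_n$ be the convergents of $\alpha$. For even $n$ put $I_n:=\left(\frac{p_n}{q_n},\frac{p_{n+2}}{q_{n+2}}\right)$. Suppose there is $N\in\mathbb{N}$ such that for every even $n>N$, $$\frac{p_n}{q_n}+\frac{\gamma}{q_n^{\tau+1}}<\frac{p_{n+2}}{q_{n+2}}-\frac{\gamma}{q_{n+2}^{\tau+1}},$$ and for even $n>N$ define $A_n:=\left(\frac{p_n}{q_n}+\frac{\gamma}{q_n^{\tau+1}},\ \frac{p_{n+2}}{q_{n+2}}-\frac{\gamma}{q_{n+2}^{\tau+1}}\right)$. Suppose moreover that for every even $n$, $$\alpha-\frac{p_n}{q_n}>\frac{\gamma}{q_n^{\tau+1}}.$$ Then there exists $N_1\in\mathbb{N}$ such that for every even $n>N_1$ and every rational $p/q$ ($p\in\mathbb{Z},q\in\mathbb{N}$): if $p/q\notin I_n$, then $\frac{p}{q}+\frac{\gamma}{q^{\tau+1}}\notin A_n$ and $\frac{p}{q}-\frac{\gamma}{q^{\tau+1}}\notin A_n$.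
   Context: For $x\in\mathbb{R}$, $\|x\|:=\min_{p\in\mathbb{Z}}|x-p|$; $\mathbb{N}=\{1,2,\dots\}$. For $\gamma>0,\tau\ge1$, $D_{\gamma,\tau}:=\{\alpha\in(0,1): \|q\alpha\|\ge\gamma/q^\tau\ \forall q\in\mathbb{N}\}$; its elements are irrational. For irrational $\alpha\in(0,1)$ write $\alpha=\cfrac{1}{a_1+\cfrac{1}{a_2+\cdots}}$ (so $a_0=0$), and let $p_n/q_n$ ($n\ge0$) be its convergents: $p_{-1}=1,q_{-1}=0,p_0=0,q_0=1$, $p_n=a_np_{n-1}+p_{n-2}$, $q_n=a_nq_{n-1}+q_{n-2}$. Even-indexed convergents lie below $\alpha$. *)

theory Defs
  imports Complex_Main
begin

definition dist_int :: "real \<Rightarrow> real" where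
  "dist_int x = \<bar>x - round x\<bar>"

definition Dioph :: "real \<Rightarrow> real \<Rightarrow> real set" where
  "Dioph \<gamma> \<tau> = {\<alpha>. 0 < \<alpha> \<and> \<alpha> < 1 \<and>
      (\<forall>q::nat. q \<ge> 1 \<longrightarrow> dist_int (real q * \<alpha>) \<ge> \<gamma> / real q powr \<tau>)}"

fun cf_rem :: "real \<Rightarrow> nat \<Rightarrow> real" where
  "cf_rem \<alpha> 0 = \<alpha>"
| "cf_rem \<alpha> (Suc n) = frac (1 / cf_rem \<alpha> n)"

text \<open>Partial quotients a_n (n >= 1); a_0 = 0 for alpha in (0,1).\<close>
definition cf_a :: "real \<Rightarrow> nat \<Rightarrow> int" where
  "cf_a \<alpha> n = (if n = 0 then 0 else \<lfloor>1 / cf_rem \<alpha> (n - 1)\<rfloor>)"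

text \<open>Convergent numerators/denominators with p_{-1}=1, q_{-1}=0, p_0=0, q_0=1.\<close>
fun cf_p :: "real \<Rightarrow> nat \<Rightarrow> int" where
  "cf_p \<alpha> 0 = 0"
| "cf_p \<alpha> (Suc 0) = cf_a \<alpha> 1 * 0 + 1"
| "cf_p \<alpha> (Suc (Suc n)) = cf_a \<alpha> (n + 2) * cf_p \<alpha> (Suc n) + cf_p \<alpha> n"

fun cf_q :: "real \<Rightarrow> nat \<Rightarrow> int" where
  "cf_q \<alpha> 0 = 1"
| "cf_q \<alpha> (Suc 0) = cf_a \<alpha> 1 * 1 + 0"
| "cf_q \<alpha> (Suc (Suc n)) = cf_a \<alpha> (n + 2) * cf_q \<alpha> (Suc n) + cf_q \<alpha> n"

definition conv :: "real \<Rightarrow> nat \<Rightarrow> real" where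
  "conv \<alpha> n = real_of_int (cf_p \<alpha> n) / real_of_int (cf_q \<alpha> n)"

end

theory Submission
  imports Defs
begin

(* Write x = p/q and r(q) = gamma/q^(tau+1).
   If x <= p_n/q_n, then x - r(q) lies left of A_n, while x + r(q) <= p_k/q_k + r(q_k) for some
   even k <= n: when p_{k-2}/q_{k-2} < x <= p_k/q_k, either q >= q_k, or the determinant identity
   p_{j+1} q_j - p_j q_{j+1} = (-1)^j gives p_k/q_k - x >= 1/(2 q^2) >= r(q) (here gamma <= 1/2
   and tau >= 1 are used).  The left endpoints of the A_k increase for k > N and tend to alpha,
   whereas the finitely many earlier ones stay below alpha, so for large n the left endpoint of
   A_n dominates all earlier ones.
   If x >= p_{n+2}/q_{n+2}, then x + r(q) lies right of A_n, and
   x - r(q) >= p_{n+2}/q_{n+2} - r(q_{n+2}): for x < alpha because then q >= q_{n+2}, and for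
   x > alpha because alpha is Diophantine. *)

definition dioph_radius :: "real \<Rightarrow> real \<Rightarrow> real \<Rightarrow> real" where
  "dioph_radius \<gamma> \<tau> x = \<gamma> / x powr (\<tau> + 1)"

definition gap_interval :: "real \<Rightarrow> real \<Rightarrow> real \<Rightarrow> nat \<Rightarrow> real set" where
  "gap_interval \<alpha> \<gamma> \<tau> n =
     {conv \<alpha> n + dioph_radius \<gamma> \<tau> (of_int (cf_q \<alpha> n)) <..<
      conv \<alpha> (n + 2) - dioph_radius \<gamma> \<tau> (of_int (cf_q \<alpha> (n + 2)))}"

lemma dioph_radius_pos: "0 < \<gamma> \<Longrightarrow> 0 < x \<Longrightarrow> 0 < dioph_radius \<gamma> \<tau> x"
  by (simp add: dioph_radius_def)

lemma dioph_radius_nonneg: "0 \<le> \<gamma> \<Longrightarrow> 0 < x \<Longrightarrow> 0 \<le> dioph_radius \<gamma> \<tau> x"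
  by (simp add: dioph_radius_def)

lemma dioph_radius_antimono:
  assumes "0 \<le> \<gamma>" "0 \<le> \<tau> + 1" "0 < x" "x \<le> y"
  shows "dioph_radius \<gamma> \<tau> y \<le> dioph_radius \<gamma> \<tau> x"
  unfolding dioph_radius_def
  using assms by (intro divide_left_mono powr_mono2 mult_pos_pos) auto

lemma dioph_radius_le_square:
  assumes "0 \<le> \<gamma>" "1 \<le> \<tau>" "1 \<le> x"
  shows "dioph_radius \<gamma> \<tau> x \<le> \<gamma> / x\<^sup>2"
proof -
  have "x powr 2 \<le> x powr (\<tau> + 1)"
    using assms by (intro powr_mono) auto
  then show ?thesis
    unfolding dioph_radius_def using assms
    by (intro divide_left_mono) (auto simp: powr_numeral)
qed

lemma of_int_divide_less_iff:
  assumes "0 < b" "0 < d"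
  shows "real_of_int a / of_int b < of_int c / of_int d \<longleftrightarrow> a * d < c * b"
proof -
  have "real_of_int a / of_int b < of_int c / of_int d \<longleftrightarrow> of_int (a * d) < real_of_int (c * b)"
    using assms by (simp add: field_simps)
  then show ?thesis by linarith
qed

lemma of_int_divide_le_iff:
  assumes "0 < b" "0 < d"
  shows "real_of_int a / of_int b \<le> of_int c / of_int d \<longleftrightarrow> a * d \<le> c * b"
  using of_int_divide_less_iff[OF assms(2,1), of c a] by linarith

lemma Dioph_approx:
  assumes "\<alpha> \<in> Dioph \<gamma> \<tau>" "0 < q"
  shows "dioph_radius \<gamma> \<tau> (of_int q) \<le> \<bar>\<alpha> - of_int p / of_int q\<bar>"
proof -
  have q: "0 < real_of_int q" "real (nat q) = of_int q"
    using assms(2) by auto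
  have "\<gamma> / real (nat q) powr \<tau> \<le> dist_int (real (nat q) * \<alpha>)"
    using assms unfolding Dioph_def by (auto dest: spec[of _ "nat q"])
  then have "\<gamma> / of_int q powr \<tau> \<le> \<bar>of_int q * \<alpha> - of_int (round (of_int q * \<alpha>))\<bar>"
    unfolding dist_int_def q(2) .
  also have "\<dots> \<le> \<bar>of_int q * \<alpha> - of_int p\<bar>"
    by (rule round_diff_minimal)
  also have "\<dots> = of_int q * \<bar>\<alpha> - of_int p / of_int q\<bar>"
    using q by (simp add: field_simps flip: abs_mult)
  finally have "\<gamma> / of_int q powr \<tau> / of_int q \<le> \<bar>\<alpha> - of_int p / of_int q\<bar>"
    using q by (simp add: divide_le_eq mult.commute mult.left_commute)
  then show ?thesis
    using q by (simp add: dioph_radius_def powr_add)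
qed

lemma Dioph_irrational:
  assumes "\<alpha> \<in> Dioph \<gamma> \<tau>" "0 < \<gamma>"
  shows "\<alpha> \<notin> \<rat>"
proof
  assume "\<alpha> \<in> \<rat>"
  then obtain p q where "0 < q" "\<alpha> = of_int p / of_int q"
    by (rule Rats_cases')
  then show False
    using Dioph_approx[OF assms(1), of q p] dioph_radius_pos[OF assms(2), of "of_int q" \<tau>] by simp
qed

lemma Dioph_const_le_half:
  assumes "\<alpha> \<in> Dioph \<gamma> \<tau>"
  shows "\<gamma> \<le> 1/2"
proof -
  have "\<gamma> \<le> dist_int \<alpha>"
    using assms unfolding Dioph_def by (auto dest: spec[of _ 1])
  moreover have "dist_int \<alpha> \<le> 1/2"
    unfolding dist_int_def using of_int_round_abs_le[of \<alpha>] by linarith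
  ultimately show ?thesis by linarith
qed

lemma inverse_cf_rem: "1 / cf_rem \<alpha> n = of_int (cf_a \<alpha> (Suc n)) + cf_rem \<alpha> (Suc n)"
  by (simp add: cf_a_def frac_def)

lemma cf_det: "cf_p \<alpha> (Suc k) * cf_q \<alpha> k - cf_p \<alpha> k * cf_q \<alpha> (Suc k) = (-1) ^ k"
proof (induction k)
  case (Suc k)
  have "cf_p \<alpha> (Suc (Suc k)) * cf_q \<alpha> (Suc k) - cf_p \<alpha> (Suc k) * cf_q \<alpha> (Suc (Suc k))
      = - (cf_p \<alpha> (Suc k) * cf_q \<alpha> k - cf_p \<alpha> k * cf_q \<alpha> (Suc k))"
    by (simp add: algebra_simps)
  with Suc show ?case by simp
qed simp

lemma cf_denom_decomp:
  "q * (-1) ^ k = (p * cf_q \<alpha> k - cf_p \<alpha> k * q) * cf_q \<alpha> (Suc k)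
                 + (cf_p \<alpha> (Suc k) * q - p * cf_q \<alpha> (Suc k)) * cf_q \<alpha> k"
  by (simp flip: cf_det[of \<alpha> k]) (simp add: algebra_simps)

declare cf_rem.simps(2) [simp del] cf_p.simps(3) [simp del] cf_q.simps(3) [simp del]

context
  fixes \<alpha> :: real
  assumes alpha_irrational: "\<alpha> \<notin> \<rat>" and alpha_pos: "0 < \<alpha>" and alpha_less_1: "\<alpha> < 1"
begin

lemma cf_rem_bounds: "0 < cf_rem \<alpha> n \<and> cf_rem \<alpha> n < 1 \<and> cf_rem \<alpha> n \<notin> \<rat>"
proof (induction n)
  case 0
  then show ?case using alpha_irrational alpha_pos alpha_less_1 by simp
next
  case (Suc n)
  let ?y = "1 / cf_rem \<alpha> n"
  have rem: "cf_rem \<alpha> (Suc n) = frac ?y"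
    by (rule cf_rem.simps(2))
  have "?y \<notin> \<rat>"
    using Suc Rats_divide[OF Rats_1, of ?y] by auto
  moreover have "?y = frac ?y + of_int \<lfloor>?y\<rfloor>"
    by (simp add: frac_def)
  ultimately have irr: "frac ?y \<notin> \<rat>"
    by (metis Rats_add Rats_of_int)
  then have "frac ?y \<noteq> 0" by (metis Rats_0)
  with irr show ?case by (simp add: rem frac_lt_1 order.not_eq_order_implies_strict)
qed

lemma cf_a_ge_1: "1 \<le> cf_a \<alpha> (Suc n)"
  using cf_rem_bounds[of n] by (simp add: cf_a_def)

lemma cf_q_ge: "1 \<le> cf_q \<alpha> n \<and> int n \<le> cf_q \<alpha> n"
proof (induction n rule: induct_nat_012)
  case (ge2 n)
  have "cf_q \<alpha> (Suc n) \<le> cf_a \<alpha> (n + 2) * cf_q \<alpha> (Suc n)"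
    using ge2 cf_a_ge_1[of "Suc n"] by simp
  then have "int (Suc (Suc n)) \<le> cf_q \<alpha> (Suc (Suc n))"
    using ge2 by (simp only: cf_q.simps) linarith
  then show ?case by simp
qed (use cf_a_ge_1[of 0] in simp_all)

lemma cf_q_pos: "0 < cf_q \<alpha> n"
  using cf_q_ge[of n] by simp

lemma cf_alpha_eq:
  "\<alpha> * (of_int (cf_q \<alpha> (Suc m)) + of_int (cf_q \<alpha> m) * cf_rem \<alpha> (Suc m))
     = of_int (cf_p \<alpha> (Suc m)) + of_int (cf_p \<alpha> m) * cf_rem \<alpha> (Suc m)"
proof (induction m)
  case 0
  have "1 / \<alpha> = of_int (cf_a \<alpha> 1) + cf_rem \<alpha> 1"
    using inverse_cf_rem[of \<alpha> 0] by simp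
  then show ?case
    using alpha_pos by (simp add: field_simps)
next
  case (Suc m)
  define r where "r = cf_rem \<alpha> (Suc m)"
  define r' where "r' = cf_rem \<alpha> (Suc (Suc m))"
  define a where "a = real_of_int (cf_a \<alpha> (m + 2))"
  have ra: "r * (a + r') = 1"
    using inverse_cf_rem[of \<alpha> "Suc m"] cf_rem_bounds[of "Suc m"]
    by (simp add: r_def r'_def a_def field_simps)
  have "\<alpha> * (of_int (cf_q \<alpha> (Suc m)) * (a + r') + of_int (cf_q \<alpha> m) * (r * (a + r')))
      = of_int (cf_p \<alpha> (Suc m)) * (a + r') + of_int (cf_p \<alpha> m) * (r * (a + r'))"
    using arg_cong[OF Suc, of "\<lambda>z. z * (a + r')"] by (simp add: r_def algebra_simps)
  then have "\<alpha> * (of_int (cf_q \<alpha> (Suc m)) * (a + r') + of_int (cf_q \<alpha> m))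
      = of_int (cf_p \<alpha> (Suc m)) * (a + r') + of_int (cf_p \<alpha> m)"
    by (simp add: ra)
  then show ?case
    by (simp add: r'_def [symmetric] a_def cf_p.simps(3) cf_q.simps(3) algebra_simps)
qed

lemma alpha_minus_conv_Suc:
  "\<alpha> - conv \<alpha> (Suc m) = (-1) ^ Suc m * cf_rem \<alpha> (Suc m) /
     (of_int (cf_q \<alpha> (Suc m)) * (of_int (cf_q \<alpha> (Suc m)) + of_int (cf_q \<alpha> m) * cf_rem \<alpha> (Suc m)))"
proof -
  define r where "r = cf_rem \<alpha> (Suc m)"
  define Q1 where "Q1 = real_of_int (cf_q \<alpha> (Suc m))"
  define Q0 where "Q0 = real_of_int (cf_q \<alpha> m)"
  define P1 where "P1 = real_of_int (cf_p \<alpha> (Suc m))"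
  define P0 where "P0 = real_of_int (cf_p \<alpha> m)"
  have eq: "\<alpha> * (Q1 + Q0 * r) = P1 + P0 * r"
    using cf_alpha_eq[of m] by (simp add: r_def Q1_def Q0_def P1_def P0_def)
  have det: "P1 * Q0 - P0 * Q1 = (-1) ^ m"
    using arg_cong[OF cf_det[of \<alpha> m], of real_of_int] by (simp add: P1_def Q0_def P0_def Q1_def)
  have positive: "0 < Q1" "0 < Q0" "0 < r"
    using cf_q_pos cf_rem_bounds by (auto simp: Q1_def Q0_def r_def)
  have "(\<alpha> - P1 / Q1) * (Q1 * (Q1 + Q0 * r)) = \<alpha> * (Q1 + Q0 * r) * Q1 - P1 * (Q1 + Q0 * r)"
    using positive by (simp add: field_simps)
  also have "\<dots> = (P1 + P0 * r) * Q1 - P1 * (Q1 + Q0 * r)"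
    by (simp add: eq)
  also have "\<dots> = - (P1 * Q0 - P0 * Q1) * r"
    by (simp add: algebra_simps)
  also have "\<dots> = (-1) ^ Suc m * r"
    by (simp add: det)
  finally have "\<alpha> - P1 / Q1 = (-1) ^ Suc m * r / (Q1 * (Q1 + Q0 * r))"
    using positive add_pos_pos[of Q1 "Q0 * r"] by (subst eq_divide_eq) simp
  then show ?thesis
    by (simp add: conv_def r_def Q1_def Q0_def P1_def)
qed

lemma alpha_minus_conv_Suc_denom_pos:
  "0 < of_int (cf_q \<alpha> (Suc m)) * (of_int (cf_q \<alpha> (Suc m)) + of_int (cf_q \<alpha> m) * cf_rem \<alpha> (Suc m))"
  using cf_q_pos[of m] cf_q_pos[of "Suc m"] cf_rem_bounds[of "Suc m"] by (simp add: add_pos_pos)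

lemma conv_odd_gt:
  assumes "odd n"
  shows "\<alpha> < conv \<alpha> n"
proof -
  obtain m where "n = Suc m" "even m"
    using assms by (cases n) auto
  with alpha_minus_conv_Suc[of m] alpha_minus_conv_Suc_denom_pos[of m] cf_rem_bounds[of "Suc m"]
  have "\<alpha> - conv \<alpha> n < 0"
    by (simp add: zero_less_divide_iff)
  then show ?thesis by simp
qed

lemma conv_even_lt:
  assumes "even n"
  shows "conv \<alpha> n < \<alpha>"
proof (cases n)
  case 0
  then show ?thesis using alpha_pos by (simp add: conv_def)
next
  case (Suc m)
  with assms have "odd m" by simp
  with Suc alpha_minus_conv_Suc[of m] alpha_minus_conv_Suc_denom_pos[of m] cf_rem_bounds[of "Suc m"]
  have "0 < \<alpha> - conv \<alpha> n"
    by (simp add: zero_less_divide_iff)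
  then show ?thesis by simp
qed

lemma abs_alpha_minus_conv_Suc_less: "\<bar>\<alpha> - conv \<alpha> (Suc m)\<bar> < 1 / real (Suc m)"
proof -
  define D where "D = of_int (cf_q \<alpha> (Suc m)) * (of_int (cf_q \<alpha> (Suc m)) + of_int (cf_q \<alpha> m) * cf_rem \<alpha> (Suc m))"
  have Q1: "real (Suc m) \<le> of_int (cf_q \<alpha> (Suc m))"
    using cf_q_ge[of "Suc m"] by linarith
  moreover have "0 \<le> of_int (cf_q \<alpha> m) * cf_rem \<alpha> (Suc m)"
    using cf_q_pos[of m] cf_rem_bounds[of "Suc m"] by simp
  with Q1 have "of_int (cf_q \<alpha> (Suc m)) * 1 \<le> D"
    unfolding D_def by (intro mult_left_mono) auto
  ultimately have "1 / D \<le> 1 / real (Suc m)"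
    by (intro divide_left_mono) auto
  moreover have "0 < D"
    using alpha_minus_conv_Suc_denom_pos[of m] by (simp add: D_def)
  moreover have "\<bar>\<alpha> - conv \<alpha> (Suc m)\<bar> = cf_rem \<alpha> (Suc m) / D"
    using alpha_minus_conv_Suc[of m] cf_rem_bounds[of "Suc m"] \<open>0 < D\<close>
    by (simp add: D_def [symmetric] abs_mult power_abs)
  moreover have "cf_rem \<alpha> (Suc m) / D < 1 / D"
    using cf_rem_bounds[of "Suc m"] \<open>0 < D\<close> by (simp add: divide_strict_right_mono)
  ultimately show ?thesis by linarith
qed

lemma conv_tendsto: "conv \<alpha> \<longlonglongrightarrow> \<alpha>"
proof -
  have "(\<lambda>m. conv \<alpha> (Suc m) - \<alpha>) \<longlonglongrightarrow> 0"
    by (rule LIMSEQ_norm_0) (metis abs_alpha_minus_conv_Suc_less abs_minus_commute real_norm_def)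
  then show ?thesis
    by (simp add: LIM_zero_iff filterlim_sequentially_Suc)
qed

lemma denom_ge_of_even_conv_le:
  assumes "even m" "0 < q" "conv \<alpha> m \<le> of_int p / of_int q" "of_int p / of_int q < \<alpha>"
  shows "cf_q \<alpha> m \<le> q"
proof -
  have "0 \<le> p * cf_q \<alpha> m - cf_p \<alpha> m * q"
    using assms(3) of_int_divide_le_iff[OF cf_q_pos assms(2)] by (simp add: conv_def)
  then have "0 \<le> (p * cf_q \<alpha> m - cf_p \<alpha> m * q) * cf_q \<alpha> (Suc m)"
    using cf_q_pos[of "Suc m"] by simp
  moreover have "of_int p / of_int q < conv \<alpha> (Suc m)"
    using assms(1,4) conv_odd_gt[of "Suc m"] by simp
  then have "1 \<le> cf_p \<alpha> (Suc m) * q - p * cf_q \<alpha> (Suc m)"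
    using of_int_divide_less_iff[OF assms(2) cf_q_pos] by (simp add: conv_def)
  then have "1 * cf_q \<alpha> m \<le> (cf_p \<alpha> (Suc m) * q - p * cf_q \<alpha> (Suc m)) * cf_q \<alpha> m"
    using cf_q_pos[of m] by (intro mult_right_mono) auto
  moreover have "q = (p * cf_q \<alpha> m - cf_p \<alpha> m * q) * cf_q \<alpha> (Suc m)
                 + (cf_p \<alpha> (Suc m) * q - p * cf_q \<alpha> (Suc m)) * cf_q \<alpha> m"
    using cf_denom_decomp[of q m p \<alpha>] by (simp only: neg_one_even_power[OF assms(1)] mult_1_right)
  ultimately show ?thesis by linarith
qed

lemma denom_ge_of_even_conv_less:
  assumes "even m" "0 < q" "conv \<alpha> m < of_int p / of_int q" "of_int p / of_int q < \<alpha>"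
  shows "cf_q \<alpha> (Suc m) \<le> q"
proof -
  have "1 \<le> p * cf_q \<alpha> m - cf_p \<alpha> m * q"
    using assms(3) of_int_divide_less_iff[OF cf_q_pos assms(2)] by (simp add: conv_def)
  then have "1 * cf_q \<alpha> (Suc m) \<le> (p * cf_q \<alpha> m - cf_p \<alpha> m * q) * cf_q \<alpha> (Suc m)"
    using cf_q_pos[of "Suc m"] by (intro mult_right_mono) auto
  moreover have "of_int p / of_int q < conv \<alpha> (Suc m)"
    using assms(1,4) conv_odd_gt[of "Suc m"] by simp
  then have "0 \<le> (cf_p \<alpha> (Suc m) * q - p * cf_q \<alpha> (Suc m)) * cf_q \<alpha> m"
    using of_int_divide_less_iff[OF assms(2) cf_q_pos] cf_q_pos[of m] by (simp add: conv_def)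
  moreover have "q = (p * cf_q \<alpha> m - cf_p \<alpha> m * q) * cf_q \<alpha> (Suc m)
                 + (cf_p \<alpha> (Suc m) * q - p * cf_q \<alpha> (Suc m)) * cf_q \<alpha> m"
    using cf_denom_decomp[of q m p \<alpha>] by (simp only: neg_one_even_power[OF assms(1)] mult_1_right)
  ultimately show ?thesis by linarith
qed


lemma conv_minus_ge_of_denom_less:
  assumes "even m" "0 < q"
    and "conv \<alpha> m < of_int p / of_int q" "of_int p / of_int q \<le> conv \<alpha> (m + 2)"
    and "q < cf_q \<alpha> (m + 2)"
  shows "1 / (2 * of_int q ^ 2) \<le> conv \<alpha> (m + 2) - of_int p / of_int q"
proof -
  define A where "A = cf_p \<alpha> (m + 2) * q - p * cf_q \<alpha> (m + 2)"
  define B where "B = cf_p \<alpha> (Suc m) * q - p * cf_q \<alpha> (Suc m)"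
  have "of_int p / of_int q < \<alpha>"
    using assms(1,4) conv_even_lt[of "m + 2"] by simp
  then have Q1: "cf_q \<alpha> (Suc m) \<le> q"
    using denom_ge_of_even_conv_less assms by blast
  have "0 \<le> A"
    using assms(4) of_int_divide_le_iff[OF assms(2) cf_q_pos] by (simp add: A_def conv_def)
  have "of_int p / of_int q < conv \<alpha> (Suc m)"
    using \<open>of_int p / of_int q < \<alpha>\<close> assms(1) conv_odd_gt[of "Suc m"] by simp
  then have "1 \<le> B"
    using of_int_divide_less_iff[OF assms(2) cf_q_pos] by (simp add: B_def conv_def)
  have "Suc (Suc m) = m + 2" "odd (Suc m)"
    using assms(1) by simp_all
  then have decomp: "q = B * cf_q \<alpha> (m + 2) - A * cf_q \<alpha> (Suc m)"
    using cf_denom_decomp[of q "Suc m" p \<alpha>] by (simp add: A_def B_def algebra_simps)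
  have B_Q2: "cf_q \<alpha> (m + 2) \<le> B * cf_q \<alpha> (m + 2)"
    using \<open>1 \<le> B\<close> cf_q_pos[of "m + 2"] by simp
  have "1 \<le> A"
  proof (rule ccontr)
    assume "\<not> 1 \<le> A"
    with \<open>0 \<le> A\<close> have "A = 0" by simp
    with decomp B_Q2 assms(5) show False by simp
  qed
  have "A * cf_q \<alpha> (Suc m) \<le> A * q"
    using Q1 \<open>0 \<le> A\<close> by (rule mult_left_mono)
  moreover have "q \<le> A * q"
    using \<open>1 \<le> A\<close> assms(2) by simp
  ultimately have "cf_q \<alpha> (m + 2) \<le> 2 * (A * q)"
    using decomp B_Q2 by linarith
  then have Q2: "real_of_int (cf_q \<alpha> (m + 2)) \<le> 2 * (of_int A * of_int q)"
    by (metis of_int_le_iff of_int_mult of_int_numeral)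
  have "1 / (2 * real_of_int q ^ 2) = of_int A / (2 * (of_int A * of_int q) * of_int q)"
    using \<open>1 \<le> A\<close> assms(2) by (simp add: power2_eq_square)
  also have "\<dots> \<le> of_int A / (of_int (cf_q \<alpha> (m + 2)) * of_int q)"
    using Q2 \<open>1 \<le> A\<close> assms(2) cf_q_pos[of "m + 2"]
    by (intro divide_left_mono mult_right_mono) simp_all
  also have "\<dots> = conv \<alpha> (m + 2) - of_int p / of_int q"
    using assms(2) cf_q_pos[of "m + 2"] by (simp add: A_def conv_def field_simps)
  finally show ?thesis .
qed

lemma add_radius_le_of_between_even_convs:
  assumes "even m" "0 < q" "0 \<le> \<gamma>" "\<gamma> \<le> 1/2" "1 \<le> \<tau>"
    and "conv \<alpha> m < of_int p / of_int q" "of_int p / of_int q \<le> conv \<alpha> (m + 2)"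
  shows "of_int p / of_int q + dioph_radius \<gamma> \<tau> (of_int q)
           \<le> conv \<alpha> (m + 2) + dioph_radius \<gamma> \<tau> (of_int (cf_q \<alpha> (m + 2)))"
proof (cases "cf_q \<alpha> (m + 2) \<le> q")
  case True
  then have "dioph_radius \<gamma> \<tau> (of_int q) \<le> dioph_radius \<gamma> \<tau> (of_int (cf_q \<alpha> (m + 2)))"
    using assms(3,5) cf_q_pos by (intro dioph_radius_antimono) auto
  with assms(7) show ?thesis by linarith
next
  case False
  have "dioph_radius \<gamma> \<tau> (of_int q) \<le> \<gamma> / of_int q ^ 2"
    using assms(2,3,5) by (intro dioph_radius_le_square) auto
  also have "\<dots> \<le> 1 / (2 * of_int q ^ 2)"
    using assms(2,4) by (simp add: field_simps)
  also have "\<dots> \<le> conv \<alpha> (m + 2) - of_int p / of_int q"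
    using False by (intro conv_minus_ge_of_denom_less assms(1,2,6,7)) simp
  finally have "dioph_radius \<gamma> \<tau> (of_int q) \<le> conv \<alpha> (m + 2) - of_int p / of_int q" .
  moreover have "0 \<le> dioph_radius \<gamma> \<tau> (of_int (cf_q \<alpha> (m + 2)))"
    using assms(3) cf_q_pos by (simp add: dioph_radius_nonneg)
  ultimately show ?thesis by linarith
qed

lemma add_radius_le_of_le_even_conv:
  assumes "0 < q" "0 \<le> \<gamma>" "\<gamma> \<le> 1/2" "1 \<le> \<tau>"
  shows "even n \<Longrightarrow> of_int p / of_int q \<le> conv \<alpha> n \<Longrightarrow>
    \<exists>k\<le>n. even k \<and> of_int p / of_int q + dioph_radius \<gamma> \<tau> (of_int q)
                       \<le> conv \<alpha> k + dioph_radius \<gamma> \<tau> (of_int (cf_q \<alpha> k))"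
proof (induction n rule: less_induct)
  case (less n)
  show ?case
  proof (cases "n < 2")
    case True
    with less.prems have "n = 0" by presburger
    have "dioph_radius \<gamma> \<tau> (of_int q) \<le> dioph_radius \<gamma> \<tau> 1"
      using assms by (intro dioph_radius_antimono) auto
    with less.prems show ?thesis
      unfolding \<open>n = 0\<close> by (intro exI[of _ 0]) (simp add: conv_def)
  next
    case False
    define m where "m = n - 2"
    have n: "n = m + 2" "even m"
      using False less.prems(1) by (simp_all add: m_def)
    show ?thesis
    proof (cases "of_int p / of_int q \<le> conv \<alpha> m")
      case True
      then obtain k where "k \<le> m" "even k"
        "of_int p / of_int q + dioph_radius \<gamma> \<tau> (of_int q) \<le> conv \<alpha> k + dioph_radius \<gamma> \<tau> (of_int (cf_q \<alpha> k))"
        using less.IH[of m] n by auto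
      with n show ?thesis by (intro exI[of _ k]) auto
    next
      case False
      with n less.prems(2) have "of_int p / of_int q + dioph_radius \<gamma> \<tau> (of_int q)
          \<le> conv \<alpha> n + dioph_radius \<gamma> \<tau> (of_int (cf_q \<alpha> n))"
        using add_radius_le_of_between_even_convs[OF n(2) assms] by simp
      with less.prems(1) show ?thesis by blast
    qed
  qed
qed

lemma diff_radius_ge_of_ge_even_conv:
  assumes "\<alpha> \<in> Dioph \<gamma> \<tau>" "0 \<le> \<gamma>" "0 \<le> \<tau> + 1" "even m" "0 < q"
    and "conv \<alpha> m \<le> of_int p / of_int q"
  shows "conv \<alpha> m - dioph_radius \<gamma> \<tau> (of_int (cf_q \<alpha> m))
           \<le> of_int p / of_int q - dioph_radius \<gamma> \<tau> (of_int q)"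
proof (cases "of_int p / of_int q < \<alpha>")
  case True
  then have "cf_q \<alpha> m \<le> q"
    using denom_ge_of_even_conv_le assms(4-6) by blast
  then have "dioph_radius \<gamma> \<tau> (of_int q) \<le> dioph_radius \<gamma> \<tau> (of_int (cf_q \<alpha> m))"
    using assms(2,3) cf_q_pos by (intro dioph_radius_antimono) auto
  with assms(6) show ?thesis by linarith
next
  case False
  then have "dioph_radius \<gamma> \<tau> (of_int q) \<le> of_int p / of_int q - \<alpha>"
    using Dioph_approx[OF assms(1,5), of p] by linarith
  moreover have "0 \<le> dioph_radius \<gamma> \<tau> (of_int (cf_q \<alpha> m))"
    using assms(2) cf_q_pos by (simp add: dioph_radius_nonneg)
  ultimately show ?thesis
    using conv_even_lt[OF assms(4)] by linarith
qed

lemma shifted_rational_notin_gap_interval: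
  assumes "\<alpha> \<in> Dioph \<gamma> \<tau>" "0 \<le> \<gamma>" "1 \<le> \<tau>" "even n" "0 < q"
    and prefix_max: "\<And>k. even k \<Longrightarrow> k \<le> n \<Longrightarrow>
      conv \<alpha> k + dioph_radius \<gamma> \<tau> (of_int (cf_q \<alpha> k)) \<le> conv \<alpha> n + dioph_radius \<gamma> \<tau> (of_int (cf_q \<alpha> n))"
    and outside: "of_int p / of_int q \<notin> {conv \<alpha> n <..< conv \<alpha> (n + 2)}"
  shows "of_int p / of_int q + dioph_radius \<gamma> \<tau> (of_int q) \<notin> gap_interval \<alpha> \<gamma> \<tau> n
       \<and> of_int p / of_int q - dioph_radius \<gamma> \<tau> (of_int q) \<notin> gap_interval \<alpha> \<gamma> \<tau> n"
proof -
  have r: "0 \<le> dioph_radius \<gamma> \<tau> (of_int q)" "0 \<le> dioph_radius \<gamma> \<tau> (of_int (cf_q \<alpha> k))" for k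
    using assms(2,5) cf_q_pos by (simp_all add: dioph_radius_nonneg)
  consider "of_int p / of_int q \<le> conv \<alpha> n" | "conv \<alpha> (n + 2) \<le> of_int p / of_int q"
    using outside by fastforce
  then show ?thesis
  proof cases
    case 1
    then obtain k where "k \<le> n" "even k"
      "of_int p / of_int q + dioph_radius \<gamma> \<tau> (of_int q) \<le> conv \<alpha> k + dioph_radius \<gamma> \<tau> (of_int (cf_q \<alpha> k))"
      using add_radius_le_of_le_even_conv[OF assms(5,2) Dioph_const_le_half[OF assms(1)] assms(3,4)] by blast
    with prefix_max 1 r show ?thesis
      unfolding gap_interval_def by fastforce
  next
    case 2
    then have "conv \<alpha> (n + 2) - dioph_radius \<gamma> \<tau> (of_int (cf_q \<alpha> (n + 2)))
        \<le> of_int p / of_int q - dioph_radius \<gamma> \<tau> (of_int q)"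
      using assms(1-5) by (intro diff_radius_ge_of_ge_even_conv) auto
    with 2 r show ?thesis
      unfolding gap_interval_def by fastforce
  qed
qed

end

lemma eventually_prefix_max_even:
  fixes L :: "nat \<Rightarrow> real"
  assumes below: "\<And>k. even k \<Longrightarrow> L k < l"
    and mono: "\<And>k. even k \<Longrightarrow> N < k \<Longrightarrow> L k \<le> L (k + 2)"
    and approx: "\<And>K. K < l \<Longrightarrow> eventually (\<lambda>n. K < L n) sequentially"
  shows "\<exists>N1. \<forall>n k. even n \<and> N1 < n \<and> even k \<and> k \<le> n \<longrightarrow> L k \<le> L n"
proof -
  define K where "K = Max (L ` {k. k \<le> N \<and> even k})"
  have fin: "finite (L ` {k. k \<le> N \<and> even k})"
    by simp
  have K_ge: "L k \<le> K" if "k \<le> N" "even k" for k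
    unfolding K_def using fin that by (intro Max_ge) auto
  have "K \<in> L ` {k. k \<le> N \<and> even k}"
    unfolding K_def using fin by (intro Max_in) auto
  then have "K < l"
    using below by auto
  then obtain n0 where n0: "\<And>n. n0 \<le> n \<Longrightarrow> K < L n"
    using approx by (auto simp: eventually_sequentially)
  have chain: "L k \<le> L (k + 2 * d)" if "even k" "N < k" for k d
  proof (induction d)
    case (Suc d)
    have "L (k + 2 * d) \<le> L (k + 2 * d + 2)"
      using mono[of "k + 2 * d"] that by simp
    with Suc show ?case by simp
  qed simp
  have "L k \<le> L n" if "even n" "max N n0 < n" "even k" "k \<le> n" for n k
  proof (cases "k \<le> N")
    case True
    with K_ge[of k] n0[of n] that show ?thesis by simp
  next
    case False
    have "n = k + 2 * ((n - k) div 2)"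
      using that by simp
    with chain[of k "(n - k) div 2"] False that(3) show ?thesis by simp
  qed
  then show ?thesis by blast
qed

theorem lemma1:
  fixes \<gamma> \<tau> \<alpha> :: real and N :: nat
  assumes "\<gamma> > 0" and "\<tau> > 1" and "\<alpha> \<in> Dioph \<gamma> \<tau>"
    and gap: "\<forall>n. even n \<and> n > N \<longrightarrow>
       conv \<alpha> n + \<gamma> / real_of_int (cf_q \<alpha> n) powr (\<tau> + 1)
         < conv \<alpha> (n + 2) - \<gamma> / real_of_int (cf_q \<alpha> (n + 2)) powr (\<tau> + 1)"
    and below: "\<forall>n. even n \<longrightarrow>
       \<alpha> - conv \<alpha> n > \<gamma> / real_of_int (cf_q \<alpha> n) powr (\<tau> + 1)"
  shows "\<exists>N1::nat. \<forall>n. even n \<and> n > N1 \<longrightarrow>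
     (\<forall>(p::int) (q::nat). q \<ge> 1 \<longrightarrow>
        real_of_int p / real q \<notin> {conv \<alpha> n <..< conv \<alpha> (n + 2)} \<longrightarrow>
          (real_of_int p / real q + \<gamma> / real q powr (\<tau> + 1) \<notin>
             {conv \<alpha> n + \<gamma> / real_of_int (cf_q \<alpha> n) powr (\<tau> + 1) <..<
              conv \<alpha> (n + 2) - \<gamma> / real_of_int (cf_q \<alpha> (n + 2)) powr (\<tau> + 1)}
         \<and> real_of_int p / real q - \<gamma> / real q powr (\<tau> + 1) \<notin>
             {conv \<alpha> n + \<gamma> / real_of_int (cf_q \<alpha> n) powr (\<tau> + 1) <..<
              conv \<alpha> (n + 2) - \<gamma> / real_of_int (cf_q \<alpha> (n + 2)) powr (\<tau> + 1)}))"
proof -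
  have cf: "\<alpha> \<notin> \<rat>" "0 < \<alpha>" "\<alpha> < 1"
    using assms(1,3) Dioph_irrational by (auto simp: Dioph_def)
  define L where "L k = conv \<alpha> k + dioph_radius \<gamma> \<tau> (of_int (cf_q \<alpha> k))" for k
  have radius_pos: "0 < dioph_radius \<gamma> \<tau> (of_int (cf_q \<alpha> k))" for k
    using assms(1) cf_q_pos[OF cf] by (simp add: dioph_radius_pos)
  have "\<exists>N1. \<forall>n k. even n \<and> N1 < n \<and> even k \<and> k \<le> n \<longrightarrow> L k \<le> L n"
  proof (rule eventually_prefix_max_even)
    show "L k < \<alpha>" if "even k" for k
      using below that by (auto simp: L_def dioph_radius_def)
    show "L k \<le> L (k + 2)" if "even k" "N < k" for k
      using gap that radius_pos[of "k + 2"] by (fastforce simp: L_def dioph_radius_def)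
    show "eventually (\<lambda>n. K < L n) sequentially" if "K < \<alpha>" for K
      using order_tendstoD(1)[OF conv_tendsto[OF cf] that]
      by eventually_elim (use radius_pos in \<open>auto simp: L_def intro: less_trans\<close>)
  qed
  then obtain N1 where N1: "\<And>n k. even n \<Longrightarrow> N1 < n \<Longrightarrow> even k \<Longrightarrow> k \<le> n \<Longrightarrow> L k \<le> L n"
    by blast
  have "of_int p / real q + dioph_radius \<gamma> \<tau> (real q) \<notin> gap_interval \<alpha> \<gamma> \<tau> n
      \<and> of_int p / real q - dioph_radius \<gamma> \<tau> (real q) \<notin> gap_interval \<alpha> \<gamma> \<tau> n"
    if "even n" "N1 < n" "1 \<le> q" "of_int p / real q \<notin> {conv \<alpha> n <..< conv \<alpha> (n + 2)}" for n p q
    using shifted_rational_notin_gap_interval[OF cf assms(3), where n=n and q="int q" and p=p] assms(1,2) that N1[of n]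
    by (auto simp: L_def)
  then show ?thesis
    by (intro exI[of _ N1] allI impI) (simp add: gap_interval_def dioph_radius_def)
qed

end
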